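(* Let $N\ge4$, $M\ge1$, $\mathcal I_N=\{(i,j):i,j\in\{1,\dots,N\},i\ne j\}$, and for each $(i,j)\in\mathcal I_N$ let $Y_{ij}\in\{0,\dots,M\}$ and $X_{ij}\in\mathbb R^k$. Suppose that, conditional on $\mathbf X=(X_{ij})$ and fixed effects $\mathbf F=(F_i)_{i=1}^N$ with $F_i=((\gamma_i,\lambda_{im}):m=1,\dots,M)$, the $Y_{ij}$ are independent across dyads with \[ P(Y_{ij}=m\mid X_{ij},F_i,F_j)=\begin{cases}1-\Lambda(X_{ij}'\beta_0+\gamma_j-\lambda_{i1}), & m=0,\\ \Lambda(X_{ij}'\beta_0+\gamma_j-\lambda_{im})-\Lambda(X_{ij}'\beta_0+\gamma_j-\lambda_{i,m+1}), & 1\le m\le M-1,\\ \Lambda(X_{ij}'\beta_0+\gamma_j-\lambda_{iM}), & m=M,\end{cases} \] where $\Lambda(z)=e^z/(1+e^z)$, $\beta_0\in\mathbb R^k$, and $\lambda_{i1}\le\dots\le\lambda_{iM}$ for each $i$. Let $D_{ij}(m)=\mathbf 1\{Y_{ij}\ge m\}$. For a tetrad $\sigma=(i_1,i_2,j_1,j_2)$ of four distinct nodes and $(m,m')\in\{1,\dots,M\}^2$ define \[ Z_\sigma(m;m')=\tfrac12\Big((D_{i_1j_1}(m)-D_{i_1j_2}(m))-(D_{i_2j_1}(m')-D_{i_2j_2}(m'))\Big), \] $X_\sigma=(X_{i_1j_1},X_{i_1j_2},X_{i_2j_1},X_{i_2j_2})$ and $r_\sigma=(X_{i_1j_1}-X_{i_1j_2})-(X_{i_2j_1}-X_{i_2j_2})$.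 Then for any $(m,m')\in\{1,\dots,M\}^2$, \[ P\big(Z_\sigma(m;m')=1\mid Z_\sigma(m;m')\in\{-1,+1\},X_\sigma\big)=\Lambda(r_\sigma'\beta_0). \]
   Context: $\lambda_{im}$ are category-specific sender threshold effects and $\gamma_j$ is a receiver fixed effect constant across categories. *)

theory Defs
  imports "HOL-Probability.Probability"
begin

definition Lambda :: "real \<Rightarrow> real" where
  "Lambda z = exp z / (1 + exp z)"

text \<open>Ordered-logit category probabilities, with index a = X_ij'beta0 + gamma_j
  and thresholds lam m = lambda_{im} (m = 1..M).\<close>
definition ologit_prob :: "nat \<Rightarrow> real \<Rightarrow> (nat \<Rightarrow> real) \<Rightarrow> nat \<Rightarrow> real" where
  "ologit_prob M a lam m =
     (if m = 0 then 1 - Lambda (a - lam 1)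
      else if m < M then Lambda (a - lam m) - Lambda (a - lam (Suc m))
      else Lambda (a - lam M))"

definition dyads :: "nat \<Rightarrow> (nat \<times> nat) set" where
  "dyads N = {(i, j). i \<in> {1..N} \<and> j \<in> {1..N} \<and> i \<noteq> j}"

definition Dind :: "nat \<Rightarrow> nat \<Rightarrow> real" where
  "Dind y m = (if m \<le> y then 1 else 0)"

definition Ztet :: "(nat \<Rightarrow> nat \<Rightarrow> nat) \<Rightarrow> nat \<Rightarrow> nat \<Rightarrow> nat \<Rightarrow> nat \<Rightarrow> nat \<Rightarrow> nat \<Rightarrow> real" where
  "Ztet y i1 i2 j1 j2 m m' =
     (1/2) * ((Dind (y i1 j1) m - Dind (y i1 j2) m) - (Dind (y i2 j1) m' - Dind (y i2 j2) m'))"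

end

theory Submission
  imports Defs
begin

(* Summing the ordered-logit category probabilities telescopes to the tail probabilities
   P(Y_ij >= m) = Lambda(a_ij - lambda_im). By independence across dyads, the two outcome
   patterns giving Z = 1 and Z = -1 then have probabilities e^(z11+z22) R and e^(z12+z21) R
   with one common factor R, because Lambda z = e^z (1 - Lambda z). Conditioning on
   Z in {-1, 1} cancels R, and in z11 - z12 - z21 + z22 the receiver effects gamma_j and the
   thresholds lambda_(i1,m), lambda_(i2,m') cancel, leaving r_sigma' beta0. *)

lemma Lambda_eq_exp_mult_one_minus_Lambda: "Lambda z = exp z * (1 - Lambda z)"
proof -
  have "1 + exp z \<noteq> 0"
    by (metis add_pos_pos exp_gt_zero less_irrefl zero_less_one)
  then show ?thesis
    unfolding Lambda_def by (simp add: field_simps)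
qed

lemma one_minus_Lambda_pos: "0 < 1 - Lambda z"
proof -
  have "exp z < 1 + exp z" by simp
  then show ?thesis
    unfolding Lambda_def by (simp add: add_pos_pos)
qed

lemma Lambda_diff_eq: "Lambda (s - t) = exp s / (exp s + exp t)"
proof -
  have "exp s + exp t \<noteq> 0"
    by (metis add_pos_pos exp_gt_zero less_irrefl)
  then show ?thesis
    unfolding Lambda_def by (simp add: exp_diff field_simps)
qed

lemma Lambda_tetrad_odds:
  fixes z11 z12 z21 z22 :: real
  defines "P1 \<equiv> Lambda z11 * (1 - Lambda z12) * (1 - Lambda z21) * Lambda z22"
    and "P2 \<equiv> (1 - Lambda z11) * Lambda z12 * Lambda z21 * (1 - Lambda z22)"
  shows "0 < P1 + P2" and "P1 / (P1 + P2) = Lambda (z11 - z12 - z21 + z22)"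
proof -
  define R where "R = (1 - Lambda z11) * (1 - Lambda z12) * (1 - Lambda z21) * (1 - Lambda z22)"
  have R: "0 < R"
    unfolding R_def by (intro mult_pos_pos one_minus_Lambda_pos)
  have P1: "P1 = exp (z11 + z22) * R" and P2: "P2 = exp (z12 + z21) * R"
    unfolding P1_def P2_def R_def exp_add
    by (subst (1 2) Lambda_eq_exp_mult_one_minus_Lambda, simp)+
  show "0 < P1 + P2"
    unfolding P1 P2 using R by (intro add_pos_pos mult_pos_pos exp_gt_zero)
  have "P1 / (P1 + P2) = exp (z11 + z22) / (exp (z11 + z22) + exp (z12 + z21))"
    unfolding P1 P2 using R by (simp add: distrib_right[symmetric])
  also have "\<dots> = Lambda (z11 - z12 - z21 + z22)"
    by (simp add: Lambda_diff_eq[symmetric] algebra_simps)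
  finally show "P1 / (P1 + P2) = Lambda (z11 - z12 - z21 + z22)" .
qed

lemma sum_ologit_prob_upper:
  assumes "1 \<le> k" "k \<le> Mc"
  shows "(\<Sum>y = k..Mc. ologit_prob Mc a l y) = Lambda (a - l k)"
  using assms(2,1)
proof (induction k rule: inc_induct)
  case base
  then show ?case by (simp add: ologit_prob_def)
next
  case (step k)
  then show ?case
    by (simp add: sum.atLeast_Suc_atMost ologit_prob_def)
qed

lemma Ztet_eq_1_iff:
  "Ztet y i1 i2 j1 j2 m m' = 1 \<longleftrightarrow>
     m \<le> y i1 j1 \<and> y i1 j2 < m \<and> y i2 j1 < m' \<and> m' \<le> y i2 j2"
  unfolding Ztet_def Dind_def by auto

lemma Ztet_eq_minus_1_iff:
  "Ztet y i1 i2 j1 j2 m m' = -1 \<longleftrightarrow>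
     y i1 j1 < m \<and> m \<le> y i1 j2 \<and> m' \<le> y i2 j1 \<and> y i2 j2 < m'"
  unfolding Ztet_def Dind_def by auto

context prob_space
begin

lemma prob_ologit_upper:
  assumes "\<And>\<omega>. \<omega> \<in> space M \<Longrightarrow> Y \<omega> \<le> Mc"
    and "Y \<in> measurable M (count_space UNIV)"
    and "\<And>y. y \<le> Mc \<Longrightarrow> prob {\<omega> \<in> space M. Y \<omega> = y} = ologit_prob Mc a l y"
    and "1 \<le> k" "k \<le> Mc"
  shows "prob {\<omega> \<in> space M. k \<le> Y \<omega>} = Lambda (a - l k)"
proof -
  have "{\<omega> \<in> space M. k \<le> Y \<omega>} = (\<Union>y\<in>{k..Mc}. {\<omega> \<in> space M. Y \<omega> = y})"
    using assms(1) by auto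
  then have "prob {\<omega> \<in> space M. k \<le> Y \<omega>} = (\<Sum>y = k..Mc. prob {\<omega> \<in> space M. Y \<omega> = y})"
    using assms(2) by (auto intro!: finite_measure_finite_Union simp: disjoint_family_on_def)
  also have "\<dots> = (\<Sum>y = k..Mc. ologit_prob Mc a l y)"
    using assms(3,5) by simp
  also have "\<dots> = Lambda (a - l k)"
    using assms(4,5) by (rule sum_ologit_prob_upper)
  finally show ?thesis .
qed

lemma prob_ologit_lower:
  assumes "\<And>\<omega>. \<omega> \<in> space M \<Longrightarrow> Y \<omega> \<le> Mc"
    and "Y \<in> measurable M (count_space UNIV)"
    and "\<And>y. y \<le> Mc \<Longrightarrow> prob {\<omega> \<in> space M. Y \<omega> = y} = ologit_prob Mc a l y"
    and "1 \<le> k" "k \<le> Mc"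
  shows "prob {\<omega> \<in> space M. Y \<omega> < k} = 1 - Lambda (a - l k)"
proof -
  have "{\<omega> \<in> space M. Y \<omega> < k} = space M - {\<omega> \<in> space M. k \<le> Y \<omega>}"
    by auto
  then show ?thesis
    using prob_compl[of "{\<omega> \<in> space M. k \<le> Y \<omega>}"] assms(2) prob_ologit_upper[OF assms]
    by simp
qed

lemma indep_vars_prob_4:
  assumes "indep_vars (\<lambda>_. count_space UNIV) Y I"
    and "d1 \<in> I" "d2 \<in> I" "d3 \<in> I" "d4 \<in> I" and "distinct [d1, d2, d3, d4]"
  shows "prob {\<omega> \<in> space M. Y d1 \<omega> \<in> A1 \<and> Y d2 \<omega> \<in> A2 \<and> Y d3 \<omega> \<in> A3 \<and> Y d4 \<omega> \<in> A4} =
    prob {\<omega> \<in> space M. Y d1 \<omega> \<in> A1} * prob {\<omega> \<in> space M. Y d2 \<omega> \<in> A2} *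
    prob {\<omega> \<in> space M. Y d3 \<omega> \<in> A3} * prob {\<omega> \<in> space M. Y d4 \<omega> \<in> A4}"
proof -
  define A where "A d = (if d = d1 then A1 else if d = d2 then A2 else if d = d3 then A3 else A4)" for d
  have A: "A d1 = A1" "A d2 = A2" "A d3 = A3" "A d4 = A4"
    using assms(6) by (auto simp: A_def)
  have event: "Y d -` S \<inter> space M = {\<omega> \<in> space M. Y d \<omega> \<in> S}" for d S
    by auto
  have "prob {\<omega> \<in> space M. Y d1 \<omega> \<in> A1 \<and> Y d2 \<omega> \<in> A2 \<and> Y d3 \<omega> \<in> A3 \<and> Y d4 \<omega> \<in> A4} =
      prob (\<Inter>d\<in>{d1, d2, d3, d4}. Y d -` A d \<inter> space M)"
    using assms(6) by (intro arg_cong[where f = prob]) (auto simp: A_def)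
  also have "\<dots> = (\<Prod>d\<in>{d1, d2, d3, d4}. prob (Y d -` A d \<inter> space M))"
    using assms by (intro indep_varsD) auto
  also have "\<dots> = prob {\<omega> \<in> space M. Y d1 \<omega> \<in> A1} * prob {\<omega> \<in> space M. Y d2 \<omega> \<in> A2} *
      prob {\<omega> \<in> space M. Y d3 \<omega> \<in> A3} * prob {\<omega> \<in> space M. Y d4 \<omega> \<in> A4}"
    using assms(6) by (simp add: A event mult.assoc)
  finally show ?thesis .
qed

lemma prob_Ztet_eq_1:
  fixes Y :: "nat \<Rightarrow> nat \<Rightarrow> 'a \<Rightarrow> nat"
  assumes "indep_vars (\<lambda>_. count_space UNIV) (\<lambda>(i, j). Y i j) I"
    and "(i1, j1) \<in> I" "(i1, j2) \<in> I" "(i2, j1) \<in> I" "(i2, j2) \<in> I"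
    and "i1 \<noteq> i2" "j1 \<noteq> j2"
  shows "prob {\<omega> \<in> space M. Ztet (\<lambda>i j. Y i j \<omega>) i1 i2 j1 j2 m m' = 1} =
    prob {\<omega> \<in> space M. m \<le> Y i1 j1 \<omega>} * prob {\<omega> \<in> space M. Y i1 j2 \<omega> < m} *
    prob {\<omega> \<in> space M. Y i2 j1 \<omega> < m'} * prob {\<omega> \<in> space M. m' \<le> Y i2 j2 \<omega>}"
  using indep_vars_prob_4[OF assms(1-5), of "{m..}" "{..<m}" "{..<m'}" "{m'..}"] assms(6,7)
  by (simp add: Ztet_eq_1_iff)

lemma prob_Ztet_eq_minus_1:
  fixes Y :: "nat \<Rightarrow> nat \<Rightarrow> 'a \<Rightarrow> nat"
  assumes "indep_vars (\<lambda>_. count_space UNIV) (\<lambda>(i, j). Y i j) I"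
    and "(i1, j1) \<in> I" "(i1, j2) \<in> I" "(i2, j1) \<in> I" "(i2, j2) \<in> I"
    and "i1 \<noteq> i2" "j1 \<noteq> j2"
  shows "prob {\<omega> \<in> space M. Ztet (\<lambda>i j. Y i j \<omega>) i1 i2 j1 j2 m m' = -1} =
    prob {\<omega> \<in> space M. Y i1 j1 \<omega> < m} * prob {\<omega> \<in> space M. m \<le> Y i1 j2 \<omega>} *
    prob {\<omega> \<in> space M. m' \<le> Y i2 j1 \<omega>} * prob {\<omega> \<in> space M. Y i2 j2 \<omega> < m'}"
  using indep_vars_prob_4[OF assms(1-5), of "{..<m}" "{m..}" "{m'..}" "{..<m'}"] assms(6,7)
  by (simp add: Ztet_eq_minus_1_iff)

lemma prob_Ztet_in_pm1:
  fixes Y :: "nat \<Rightarrow> nat \<Rightarrow> 'a \<Rightarrow> nat"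
  assumes "\<And>i j. i \<in> {i1, i2} \<Longrightarrow> j \<in> {j1, j2} \<Longrightarrow> Y i j \<in> measurable M (count_space UNIV)"
  shows "prob {\<omega> \<in> space M. Ztet (\<lambda>i j. Y i j \<omega>) i1 i2 j1 j2 m m' \<in> {-1, 1}} =
    prob {\<omega> \<in> space M. Ztet (\<lambda>i j. Y i j \<omega>) i1 i2 j1 j2 m m' = 1} +
    prob {\<omega> \<in> space M. Ztet (\<lambda>i j. Y i j \<omega>) i1 i2 j1 j2 m m' = -1}"
proof -
  let ?Z = "\<lambda>\<omega>. Ztet (\<lambda>i j. Y i j \<omega>) i1 i2 j1 j2 m m'"
  have events: "{\<omega> \<in> space M. P (Y i j \<omega>)} \<in> sets M"
    if "i \<in> {i1, i2}" "j \<in> {j1, j2}" for P i j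
    by (rule measurable_sets_Collect[OF assms[OF that]]) simp
  have "{\<omega> \<in> space M. ?Z \<omega> = 1} \<in> sets M"
    unfolding Ztet_eq_1_iff by (intro sets.sets_Collect_conj events) simp_all
  moreover have "{\<omega> \<in> space M. ?Z \<omega> = -1} \<in> sets M"
    unfolding Ztet_eq_minus_1_iff by (intro sets.sets_Collect_conj events) simp_all
  moreover have "{\<omega> \<in> space M. ?Z \<omega> \<in> {-1, 1}} =
      {\<omega> \<in> space M. ?Z \<omega> = 1} \<union> {\<omega> \<in> space M. ?Z \<omega> = -1}"
    by auto
  ultimately show ?thesis
    by (simp add: finite_measure_Union disjoint_iff)
qed

end

theorem theorem4:
  fixes M :: "'a measure"
    and N Mc :: nat
    and Y :: "nat \<Rightarrow> nat \<Rightarrow> 'a \<Rightarrow> nat"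
    and X :: "nat \<Rightarrow> nat \<Rightarrow> real ^ 'k"
    and beta0 :: "real ^ 'k"
    and gamma :: "nat \<Rightarrow> real"
    and lam :: "nat \<Rightarrow> nat \<Rightarrow> real"
    and i1 i2 j1 j2 m m' :: nat
  assumes "prob_space M"
    and "N \<ge> 4" and "Mc \<ge> 1"
    and meas: "\<And>i j. (i, j) \<in> dyads N \<Longrightarrow> Y i j \<in> measurable M (count_space UNIV)"
    and range: "\<And>i j \<omega>. (i, j) \<in> dyads N \<Longrightarrow> \<omega> \<in> space M \<Longrightarrow> Y i j \<omega> \<le> Mc"
    and indep: "prob_space.indep_vars M (\<lambda>_. count_space UNIV) (\<lambda>(i, j). Y i j) (dyads N)"
    and model: "\<And>i j y. (i, j) \<in> dyads N \<Longrightarrow> y \<le> Mc \<Longrightarrow>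
        measure M {\<omega> \<in> space M. Y i j \<omega> = y}
          = ologit_prob Mc (X i j \<bullet> beta0 + gamma j) (lam i) y"
    and mono: "\<And>i a b. i \<in> {1..N} \<Longrightarrow> 1 \<le> a \<Longrightarrow> a \<le> b \<Longrightarrow> b \<le> Mc \<Longrightarrow> lam i a \<le> lam i b"
    and nodes: "i1 \<in> {1..N}" "i2 \<in> {1..N}" "j1 \<in> {1..N}" "j2 \<in> {1..N}"
    and dist: "distinct [i1, i2, j1, j2]"
    and mm: "m \<in> {1..Mc}" "m' \<in> {1..Mc}"
  shows "measure M {\<omega> \<in> space M. Ztet (\<lambda>i j. Y i j \<omega>) i1 i2 j1 j2 m m' \<in> {-1, 1}} > 0 \<and>
         measure M {\<omega> \<in> space M. Ztet (\<lambda>i j. Y i j \<omega>) i1 i2 j1 j2 m m' = 1}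
           / measure M {\<omega> \<in> space M. Ztet (\<lambda>i j. Y i j \<omega>) i1 i2 j1 j2 m m' \<in> {-1, 1}}
         = Lambda (((X i1 j1 - X i1 j2) - (X i2 j1 - X i2 j2)) \<bullet> beta0)"
proof -
  interpret prob_space M by fact
  define z where "z i j k = X i j \<bullet> beta0 + gamma j - lam i k" for i j k
  have dyads: "(i1, j1) \<in> dyads N" "(i1, j2) \<in> dyads N" "(i2, j1) \<in> dyads N" "(i2, j2) \<in> dyads N"
    using nodes dist by (auto simp: dyads_def)
  have upper: "prob {\<omega> \<in> space M. k \<le> Y i j \<omega>} = Lambda (z i j k)"
    if "(i, j) \<in> dyads N" "k \<in> {1..Mc}" for i j k
    using prob_ologit_upper[OF range meas model] that unfolding z_def by simp
  have lower: "prob {\<omega> \<in> space M. Y i j \<omega> < k} = 1 - Lambda (z i j k)"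
    if "(i, j) \<in> dyads N" "k \<in> {1..Mc}" for i j k
    using prob_ologit_lower[OF range meas model] that unfolding z_def by simp
  have "i1 \<noteq> i2" "j1 \<noteq> j2"
    using dist by auto
  then have Z_eq_1: "prob {\<omega> \<in> space M. Ztet (\<lambda>i j. Y i j \<omega>) i1 i2 j1 j2 m m' = 1} =
      Lambda (z i1 j1 m) * (1 - Lambda (z i1 j2 m)) * (1 - Lambda (z i2 j1 m')) * Lambda (z i2 j2 m')"
    and Z_eq_minus_1: "prob {\<omega> \<in> space M. Ztet (\<lambda>i j. Y i j \<omega>) i1 i2 j1 j2 m m' = -1} =
      (1 - Lambda (z i1 j1 m)) * Lambda (z i1 j2 m) * Lambda (z i2 j1 m') * (1 - Lambda (z i2 j2 m'))"
    using prob_Ztet_eq_1[OF indep dyads] prob_Ztet_eq_minus_1[OF indep dyads]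
      upper[OF dyads(1) mm(1)] lower[OF dyads(2) mm(1)] lower[OF dyads(3) mm(2)] upper[OF dyads(4) mm(2)]
      lower[OF dyads(1) mm(1)] upper[OF dyads(2) mm(1)] upper[OF dyads(3) mm(2)] lower[OF dyads(4) mm(2)]
    by simp_all
  have Z_in_pm1: "prob {\<omega> \<in> space M. Ztet (\<lambda>i j. Y i j \<omega>) i1 i2 j1 j2 m m' \<in> {-1, 1}} =
      prob {\<omega> \<in> space M. Ztet (\<lambda>i j. Y i j \<omega>) i1 i2 j1 j2 m m' = 1} +
      prob {\<omega> \<in> space M. Ztet (\<lambda>i j. Y i j \<omega>) i1 i2 j1 j2 m m' = -1}"
    by (rule prob_Ztet_in_pm1) (use dyads meas in auto)
  have "z i1 j1 m - z i1 j2 m - z i2 j1 m' + z i2 j2 m' =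
      ((X i1 j1 - X i1 j2) - (X i2 j1 - X i2 j2)) \<bullet> beta0"
    unfolding z_def by (simp add: inner_diff_left)
  then show ?thesis
    unfolding Z_in_pm1 Z_eq_1 Z_eq_minus_1
    using Lambda_tetrad_odds[of "z i1 j1 m" "z i1 j2 m" "z i2 j1 m'" "z i2 j2 m'"] by simp
qed

end
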